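(* Let $p$ be a prime, and let $K=\{k_1<k_2<\cdots<k_r\}$ and $L=\{l_1,\ldots,l_s\}$ be disjoint subsets of $\{0,1,\ldots,p-1\}$. Let $\mathcal{A}$ be a family of distinct subsets of $[n]$ with $|A|\pmod p\in K$ for all $A\in\mathcal{A}$ and $|A\cap B|\pmod p\in L$ for all distinct $A,B\in\mathcal{A}$. Suppose that $s+k_r\le n\le 2s-2r$ and $p+k_1-1\le (s-2r+1)+k_r$. Then \[ |\mathcal{A}|\le r\binom{n}{s}\le \binom{n}{s}+\binom{n}{s-2}+\cdots+\binom{n}{s-2r+2}=\binom{n-1}{s}+\binom{n-1}{s-1}+\cdots+\binom{n-1}{s-2r+1}. \] *)

theory Defs
  imports "HOL-Computational_Algebra.Primes"
begin

end

theory Submission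
  imports Defs "HOL.Binomial_Plus"
begin

text \<open>
  Since \<open>n \<le> 2s - 2r\<close> and \<open>r + s \<le> p\<close>, we have \<open>n < 2p\<close>, so a member of \<open>\<A>\<close> whose size is
  congruent to \<open>k\<close> modulo \<open>p\<close> has size \<open>k\<close> or \<open>k + p\<close>. A \<open>k\<close>-set of this residue class cannot lie
  inside a \<open>(k + p)\<close>-set of it, for their intersection would have size \<open>k \<in> K\<close>, and \<open>K\<close> is
  disjoint from \<open>L\<close>. So each class is an antichain on two levels of the Boolean lattice, and the
  normalized matching property bounds it by \<open>max (n choose k) (n choose (k + p))\<close>. By
  unimodality of binomial coefficients this is at most \<open>n choose s\<close>, because \<open>k \<le> n - s\<close> and
  \<open>k + p \<ge> s\<close>.
\<close>

lemma card_supersets_of_card: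
  assumes "finite X" "S \<subseteq> X" "card S \<le> b"
  shows "card {T. T \<subseteq> X \<and> card T = b \<and> S \<subseteq> T} = (card X - card S) choose (b - card S)"
proof -
  have "finite S" using assms finite_subset by blast
  have "{T. T \<subseteq> X \<and> card T = b \<and> S \<subseteq> T} = (\<lambda>R. R \<union> S) ` {R. R \<subseteq> X - S \<and> card R = b - card S}"
  proof (intro equalityI subsetI)
    fix T assume "T \<in> {T. T \<subseteq> X \<and> card T = b \<and> S \<subseteq> T}"
    then have "T = (T - S) \<union> S" "T - S \<subseteq> X - S" "card (T - S) = b - card S"
      using \<open>finite S\<close> by (auto simp: card_Diff_subset)
    then show "T \<in> (\<lambda>R. R \<union> S) ` {R. R \<subseteq> X - S \<and> card R = b - card S}" by blast
  next
    fix T assume "T \<in> (\<lambda>R. R \<union> S) ` {R. R \<subseteq> X - S \<and> card R = b - card S}"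
    then obtain R where R: "R \<subseteq> X - S" "card R = b - card S" "T = R \<union> S" by auto
    have "finite R" using R(1) assms(1) finite_subset by blast
    moreover have "R \<inter> S = {}" using R(1) by blast
    ultimately have "card T = b" using R \<open>finite S\<close> assms(3) by (simp add: card_Un_disjoint)
    then show "T \<in> {T. T \<subseteq> X \<and> card T = b \<and> S \<subseteq> T}" using R assms(2) by auto
  qed
  moreover have "inj_on (\<lambda>R. R \<union> S) {R. R \<subseteq> X - S \<and> card R = b - card S}"
    by (intro inj_onI) blast
  moreover have "card (X - S) = card X - card S" using assms \<open>finite S\<close> by (simp add: card_Diff_subset)
  ultimately show ?thesis using assms(1) by (simp add: card_image n_subsets)
qed

lemma normalized_matching_upper_shadow:
  assumes "finite X" "card X = n" "a \<le> b" "b \<le> n"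
    and F: "\<And>S. S \<in> F \<Longrightarrow> S \<subseteq> X \<and> card S = a"
  shows "card F * (n choose b) \<le> card {T. T \<subseteq> X \<and> card T = b \<and> (\<exists>S\<in>F. S \<subseteq> T)} * (n choose a)"
proof -
  define U where "U = {T. T \<subseteq> X \<and> card T = b \<and> (\<exists>S\<in>F. S \<subseteq> T)}"
  define incident where "incident S T = (if S \<subseteq> T then 1 else (0::nat))" for S T :: "'a set"
  have "finite U" unfolding U_def using assms(1) by simp
  have "finite F" using F assms(1) by (meson Pow_iff finite_Pow_iff finite_subset subsetI)
  have supersets: "(\<Sum>T\<in>U. incident S T) = (n - a) choose (b - a)" if "S \<in> F" for S
  proof -
    have "(\<Sum>T\<in>U. incident S T) = card {T\<in>U. S \<subseteq> T}"
      using \<open>finite U\<close> by (simp add: incident_def sum.If_cases Int_def)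
    also have "{T\<in>U. S \<subseteq> T} = {T. T \<subseteq> X \<and> card T = b \<and> S \<subseteq> T}"
      using that unfolding U_def by auto
    also have "card \<dots> = (n - a) choose (b - a)"
      using card_supersets_of_card[of X S b] F[OF that] assms by simp
    finally show ?thesis .
  qed
  have subsets: "(\<Sum>S\<in>F. incident S T) \<le> b choose a" if "T \<in> U" for T
  proof -
    have "T \<subseteq> X" "card T = b" using that unfolding U_def by auto
    then have T: "T \<subseteq> X" "card T = b" "finite T" using assms(1) finite_subset by auto
    have "(\<Sum>S\<in>F. incident S T) = card {S\<in>F. S \<subseteq> T}"
      using \<open>finite F\<close> by (simp add: incident_def sum.If_cases Int_def)
    also have "\<dots> \<le> card {S. S \<subseteq> T \<and> card S = a}"
      using F T by (intro card_mono) auto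
    also have "\<dots> = b choose a" using n_subsets[OF \<open>finite T\<close>] T by simp
    finally show ?thesis .
  qed
  have "card F * ((n - a) choose (b - a)) = (\<Sum>S\<in>F. \<Sum>T\<in>U. incident S T)"
    using supersets by simp
  also have "\<dots> = (\<Sum>T\<in>U. \<Sum>S\<in>F. incident S T)" by (rule sum.swap)
  also have "\<dots> \<le> card U * (b choose a)" using sum_mono[OF subsets] by simp
  finally have "card F * ((n - a) choose (b - a)) * (n choose a) \<le> card U * (b choose a) * (n choose a)"
    by simp
  moreover have "(n choose b) * (b choose a) = (n choose a) * ((n - a) choose (b - a))"
    using choose_mult assms by blast
  ultimately have "card F * (n choose b) * (b choose a) \<le> card U * (n choose a) * (b choose a)"
    by (metis mult.assoc mult.commute)
  moreover have "b choose a > 0" using assms by simp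
  ultimately show ?thesis unfolding U_def by simp
qed

lemma add_le_max_of_weighted_le:
  fixes f g \<alpha> \<beta> :: nat
  assumes "f * \<beta> + g * \<alpha> \<le> \<alpha> * \<beta>" "0 < \<alpha>" "0 < \<beta>"
  shows "f + g \<le> max \<alpha> \<beta>"
proof -
  have "(f + g) * min \<alpha> \<beta> \<le> f * \<beta> + g * \<alpha>" by (simp add: algebra_simps min_def add_mono)
  also have "\<dots> \<le> max \<alpha> \<beta> * min \<alpha> \<beta>" using assms(1) by (simp add: max_def min_def mult.commute)
  finally show ?thesis using assms by simp
qed

lemma card_two_level_antichain_le:
  assumes X: "finite X" "card X = n" and "a \<le> b"
    and F: "\<And>S. S \<in> F \<Longrightarrow> S \<subseteq> X \<and> card S = a"
    and G: "\<And>T. T \<in> G \<Longrightarrow> T \<subseteq> X \<and> card T = b"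
    and antichain: "\<And>S T. S \<in> F \<Longrightarrow> T \<in> G \<Longrightarrow> \<not> S \<subseteq> T"
  shows "card (F \<union> G) \<le> max (n choose a) (n choose b)"
proof (cases "b \<le> n")
  case True
  define level where "level = {T. T \<subseteq> X \<and> card T = b}"
  define U where "U = {T. T \<subseteq> X \<and> card T = b \<and> (\<exists>S\<in>F. S \<subseteq> T)}"
  have "finite level" unfolding level_def using X by simp
  have "G \<union> U \<subseteq> level" "G \<inter> U = {}" using G antichain unfolding U_def level_def by auto
  moreover have "finite G" "finite U"
    using \<open>G \<union> U \<subseteq> level\<close> \<open>finite level\<close> finite_subset by blast+
  ultimately have "card G + card U \<le> card level"
    by (metis card_Un_disjoint card_mono \<open>finite level\<close>)
  also have "card level = n choose b" unfolding level_def using n_subsets[OF X(1)] X(2) by simp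
  finally have "card G + card U \<le> n choose b" .
  moreover have "card F * (n choose b) \<le> card U * (n choose a)"
    unfolding U_def using normalized_matching_upper_shadow[OF X \<open>a \<le> b\<close> True F] by simp
  ultimately have "card F * (n choose b) + card G * (n choose a) \<le> (card U + card G) * (n choose a)"
    by (simp add: algebra_simps)
  also have "\<dots> \<le> (n choose a) * (n choose b)"
    using \<open>card G + card U \<le> n choose b\<close> by (simp add: add.commute)
  finally have "card F + card G \<le> max (n choose a) (n choose b)"
    using True \<open>a \<le> b\<close> by (intro add_le_max_of_weighted_le) auto
  then show ?thesis using card_Un_le le_trans by blast
next
  case False
  then have "G = {}" using G X card_mono by fastforce
  have "card F \<le> card {S. S \<subseteq> X \<and> card S = a}" using F X(1) by (intro card_mono) auto
  then show ?thesis using n_subsets[OF X(1)] X(2) \<open>G = {}\<close> by simp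
qed

lemma card_residue_class_le:
  assumes X: "finite X" "card X = n" and "n < 2 * p" and "\<B> \<subseteq> Pow X"
    and residue: "\<And>B. B \<in> \<B> \<Longrightarrow> card B mod p = k"
    and intersections: "\<And>B C. B \<in> \<B> \<Longrightarrow> C \<in> \<B> \<Longrightarrow> B \<noteq> C \<Longrightarrow> card (B \<inter> C) mod p \<noteq> k"
  shows "card \<B> \<le> max (n choose k) (n choose (k + p))"
proof -
  have "p > 0" using \<open>n < 2 * p\<close> by simp
  have size: "card B = k \<or> card B = k + p" if "B \<in> \<B>" for B
  proof -
    have "card B \<le> card X" using that assms(4) card_mono[OF X(1)] by blast
    then have "card B div p < 2"
      using X(2) \<open>n < 2 * p\<close> by (simp add: div_less_iff_less_mult \<open>p > 0\<close>)
    then have "card B div p = 0 \<or> card B div p = 1" by linarith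
    then show ?thesis using div_mult_mod_eq[of "card B" p] residue[OF that] by auto
  qed
  let ?F = "{B\<in>\<B>. card B = k}" and ?G = "{B\<in>\<B>. card B = k + p}"
  have "card \<B> = card (?F \<union> ?G)" using size by (intro arg_cong[of _ _ card]) blast
  also have "\<dots> \<le> max (n choose k) (n choose (k + p))"
  proof (rule card_two_level_antichain_le[OF X])
    show "\<not> S \<subseteq> T" if "S \<in> ?F" "T \<in> ?G" for S T
    proof
      assume "S \<subseteq> T"
      then have "card (S \<inter> T) mod p = card S mod p" by (simp add: Int_absorb2)
      also have "\<dots> = k" using that residue by blast
      finally have "card (S \<inter> T) mod p = k" .
      moreover have "S \<noteq> T" using that \<open>p > 0\<close> by auto
      ultimately show False using intersections that by blast
    qed
  qed (use assms(4) in auto)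
  finally show ?thesis .
qed

lemma card_le_card_mult_of_fibres:
  assumes "finite K" "\<And>A. A \<in> \<A> \<Longrightarrow> f A \<in> K" "\<And>k. k \<in> K \<Longrightarrow> card {A\<in>\<A>. f A = k} \<le> m"
  shows "card \<A> \<le> card K * m"
proof -
  have "\<A> = (\<Union>k\<in>K. {A\<in>\<A>. f A = k})" using assms(2) by auto
  then have "card \<A> \<le> (\<Sum>k\<in>K. card {A\<in>\<A>. f A = k})"
    using card_UN_le[OF assms(1), of "\<lambda>k. {A\<in>\<A>. f A = k}"] by metis
  also have "\<dots> \<le> card K * m" using sum_mono[OF assms(3)] by simp
  finally show ?thesis .
qed

lemma binomial_le_binomial_inner:
  assumes "s \<le> n" "n \<le> 2 * s" "n - s \<le> t" "t \<le> s"
  shows "n choose s \<le> n choose t"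
proof (cases "n div 2 \<le> t")
  case True
  then show ?thesis using binomial_antimono[of t s n] assms by simp
next
  case False
  then have "n choose (n - s) \<le> n choose t" using binomial_mono[of "n - s" t n] assms by simp
  then show ?thesis using binomial_symmetric[OF \<open>s \<le> n\<close>] by simp
qed

lemma binomial_outer_le_binomial:
  assumes "s \<le> n" "n \<le> 2 * s" "t \<le> n - s \<or> s \<le> t"
  shows "n choose t \<le> n choose s"
proof (cases "t \<le> n - s")
  case True
  then have "n choose t \<le> n choose (n - s)" using binomial_mono[of t "n - s" n] assms by simp
  then show ?thesis using binomial_symmetric[OF \<open>s \<le> n\<close>] by simp
next
  case False
  then show ?thesis using binomial_antimono[of s t n] assms by (cases "t \<le> n") (auto simp: binomial_eq_0)
qed

lemma sum_binomial_step2_eq_sum_binomial_pred: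
  assumes "2 * r \<le> s" "0 < n"
  shows "(\<Sum>i<r. n choose (s - 2 * i)) = (\<Sum>j<2 * r. (n - 1) choose (s - j))"
  using assms(1)
proof (induction r)
  case 0
  then show ?case by simp
next
  case (Suc r)
  have "n choose (s - 2 * r) = ((n - 1) choose (s - 2 * r)) + ((n - 1) choose (s - Suc (2 * r)))"
    using Suc.prems assms(2) choose_reduce_nat[of n "s - 2 * r"] by simp
  then show ?case using Suc by simp
qed

theorem mainTheorem8:
  fixes p n :: nat and K L :: "nat set" and \<A> :: "nat set set"
  assumes "prime p"
    and "K \<subseteq> {0..<p}" and "L \<subseteq> {0..<p}" and "K \<inter> L = {}" and "K \<noteq> {}"
    and "\<A> \<subseteq> Pow {1..n}"
    and "\<And>A. A \<in> \<A> \<Longrightarrow> card A mod p \<in> K"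
    and "\<And>A B. A \<in> \<A> \<Longrightarrow> B \<in> \<A> \<Longrightarrow> A \<noteq> B \<Longrightarrow> card (A \<inter> B) mod p \<in> L"
    and "card L + Max K \<le> n"
    and "int n \<le> 2 * int (card L) - 2 * int (card K)"
    and "int p + int (Min K) - 1 \<le> (int (card L) - 2 * int (card K) + 1) + int (Max K)"
  shows "card \<A> \<le> card K * (n choose card L)
       \<and> card K * (n choose card L) \<le> (\<Sum>i<card K. n choose (card L - 2 * i))
       \<and> (\<Sum>i<card K. n choose (card L - 2 * i)) = (\<Sum>j<2 * card K. (n - 1) choose (card L - j))"
proof -
  define r s where "r = card K" and "s = card L"
  have "finite K" "finite L" using assms(2,3) finite_subset by auto
  then have "r \<ge> 1" "r + s \<le> p"
    using assms(2-5) card_Un_disjoint[of K L] card_mono[of "{0..<p}" "K \<union> L"]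
    unfolding r_def s_def by (auto simp: Suc_le_eq card_gt_0_iff)
  then have bounds: "s \<le> n" "n + 2 * r \<le> 2 * s" "n < 2 * p" "0 < n"
    using assms(9,10) unfolding r_def s_def by linarith+
  have "card {A\<in>\<A>. card A mod p = k} \<le> n choose s" if "k \<in> K" for k
  proof -
    have "card {A\<in>\<A>. card A mod p = k} \<le> max (n choose k) (n choose (k + p))"
    proof (rule card_residue_class_le[of "{1..n}"])
      show "card (A \<inter> B) mod p \<noteq> k" if "A \<in> {A\<in>\<A>. card A mod p = k}" "B \<in> {A\<in>\<A>. card A mod p = k}"
        and "A \<noteq> B" for A B
        using that assms(4,8) \<open>k \<in> K\<close> by blast
    qed (use assms(6) bounds(3) in auto)
    moreover have "k + s \<le> n" using Max_ge[OF \<open>finite K\<close> that] assms(9) unfolding s_def by simp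
    ultimately show ?thesis
      using binomial_outer_le_binomial[of s n k] binomial_outer_le_binomial[of s n "k + p"]
        \<open>r + s \<le> p\<close> bounds(1,2) by (simp add: le_diff_conv2)
  qed
  then have "card \<A> \<le> r * (n choose s)"
    unfolding r_def using card_le_card_mult_of_fibres[OF \<open>finite K\<close>, of \<A> "\<lambda>A. card A mod p"] assms(7)
    by blast
  moreover have "n choose s \<le> n choose (s - 2 * i)" if "i < r" for i
    using that bounds by (intro binomial_le_binomial_inner) linarith+
  then have "r * (n choose s) \<le> (\<Sum>i<r. n choose (s - 2 * i))"
    using sum_mono[of "{..<r}" "\<lambda>_. n choose s"] by simp
  ultimately show ?thesis
    using sum_binomial_step2_eq_sum_binomial_pred[of r s n] bounds unfolding r_def s_def by simp
qed

end
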